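(* Let $x_1<x_2<\cdots<x_n$ be a partition, $h_i=x_{i+1}-x_i$ ($1\le i\le n-1$), $\hat h=\max_{1\le i\le n-1}h_i<1$. Let $f\in C^4([x_1,x_n])$ and $L>0$ with $|f^{(4)}(x)|\le L$ for all $x\in[x_1,x_n]$. Write $f_i=f(x_i)$, $f'_i=f'(x_i)$, $m_i=(f_{i+1}-f_i)/h_i$, $\lambda_i=\frac{h_{i+1}}{h_i+h_{i+1}}$, $\mu_i=\frac{h_i}{h_i+h_{i+1}}$. Let $i_0$ be an index with $3-\log_2(\hat h)<i_0<(n-1)+\log_2(\hat h)$, let $p_{i_0},T>0$, and let $\tilde f_{i_0}$ satisfy $|f'_{i_0}-\tilde f_{i_0}|=T\hat h^{p_{i_0}}$. Assume there is $K>0$ with $\hat h/h_i\le K$ for all $i=1,\dots,n-1$. Set $\dot f_1=f'_1$, $\dot f_{i_0}=\tilde f_{i_0}$, $\dot f_n=f'_n$, and let the remaining values $\dot f_i$ ($2\le i\le n-1$, $i\ne i_0$) be the solution of the linear system $$\lambda_{i-1}\dot f_{i-1}+2\dot f_i+\mu_{i-1}\dot f_{i+1}=3(\lambda_{i-1}m_{i-1}+\mu_{i-1}m_i),\qquad 2\le i\le n-1,\ i\ne i_0.$$ Then there exist integers $l_0<i_0<l_1$ such that $$|\dot f_i-f'_i|=\begin{cases}O(\hat h^{\min(3,p_{i_0}+1)}),&2\le i\le l_0,\\ O(\hat h^{p_{i_0}}),& l_0<i<l_1,\\ O(\hat h^{\min(3,p_{i_0}+1)}),& l_1\le i\le n-1.\end{cases}$$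 Moreover, the piecewise cubic Hermite interpolant $P$ built with the derivative values $\dot f_1,\dots,\dot f_n$ (on each $[x_i,x_{i+1}]$, $P$ is the cubic with $P(x_i)=f_i$, $P(x_{i+1})=f_{i+1}$, $P'(x_i)=\dot f_i$, $P'(x_{i+1})=\dot f_{i+1}$) has $C^2$ regularity on $[x_1,x_n]$ except at the point $x_{i_0}$.
   Context: $O(\hat h^q)$ denotes a quantity bounded in absolute value by $C\hat h^q$ with $C$ independent of the partition (it may depend on $f$, $L$, $K$, $T$). *)

theory Defs
  imports "HOL-Analysis.Analysis"
begin

definition step :: "(nat \<Rightarrow> real) \<Rightarrow> nat \<Rightarrow> real" where
  "step x i = x (Suc i) - x i"

definition hmax :: "(nat \<Rightarrow> real) \<Rightarrow> nat \<Rightarrow> real" where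
  "hmax x n = Max (step x ` {1..n-1})"

text \<open>The cubic Hermite piece on [x i, x (i+1)] with values fv, derivative values dv:
  the cubic with P(x_i)=f_i, P(x_{i+1})=f_{i+1}, P'(x_i)=dv_i, P'(x_{i+1})=dv_{i+1}.\<close>
definition hermite_piece ::
  "(nat \<Rightarrow> real) \<Rightarrow> (nat \<Rightarrow> real) \<Rightarrow> (nat \<Rightarrow> real) \<Rightarrow> nat \<Rightarrow> real \<Rightarrow> real" where
  "hermite_piece x fv dv i t =
     (let h = step x i; s = (t - x i) / h in
        fv i * (2 * s ^ 3 - 3 * s ^ 2 + 1) + h * dv i * (s ^ 3 - 2 * s ^ 2 + s)
      + fv (Suc i) * (-2 * s ^ 3 + 3 * s ^ 2) + h * dv (Suc i) * (s ^ 3 - s ^ 2))"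

definition piece_index :: "(nat \<Rightarrow> real) \<Rightarrow> nat \<Rightarrow> real \<Rightarrow> nat" where
  "piece_index x n t =
     (if t < x n then (GREATEST i. 1 \<le> i \<and> i < n \<and> x i \<le> t) else n - 1)"

definition pchip ::
  "(nat \<Rightarrow> real) \<Rightarrow> nat \<Rightarrow> (nat \<Rightarrow> real) \<Rightarrow> (nat \<Rightarrow> real) \<Rightarrow> real \<Rightarrow> real" where
  "pchip x n fv dv t = hermite_piece x fv dv (piece_index x n t) t"

end

(*
  The errors e i = fdot i - f'(x i) satisfy the same tridiagonal system as the values fdot i, with
  the truncation error of the system at the exact derivatives as right-hand side; a fourth-order
  Taylor expansion bounds it by 4 L hmax^3. Since the diagonal 2 dominates lambda + mu = 1, a
  discrete maximum principle applies: with e 1 = e n = 0 and |e i0| = T hmax^p, comparison with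
  the barrier 4 L hmax^3 + T hmax^p / 2^|i - i0| bounds every |e i|. The perturbation at i0 thus
  decays geometrically and is below hmax^(p+1) about log2 (1/hmax) nodes away from i0, which gives
  the three zones.

  The spline equation at an interior node x j is, up to a nonzero factor, the jump of the second
  derivative of the Hermite interpolant at x j. It is imposed at every interior node except x i0,
  so the interpolant is C^2 away from x i0.
*)
theory Submission
  imports Defs
begin

section \<open>Taylor estimates\<close>

lemma abs_le_of_deriv_bound_power:
  fixes g g' :: "real \<Rightarrow> real"
  assumes c: "c \<in> {a..b}" and t: "t \<in> {a..b}"
    and deriv: "\<And>s. s \<in> {a..b} \<Longrightarrow> (g has_real_derivative g' s) (at s within {a..b})"
    and "g c = 0" and "0 \<le> M"
    and bound: "\<And>s. s \<in> {a..b} \<Longrightarrow> \<bar>g' s\<bar> \<le> M * \<bar>s - c\<bar> ^ k"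
  shows "\<bar>g t\<bar> \<le> M * \<bar>t - c\<bar> ^ Suc k"
proof -
  let ?S = "{min c t..max c t}"
  have sub: "?S \<subseteq> {a..b}" using c t by auto
  have "norm (g t - g c) \<le> (M * \<bar>t - c\<bar> ^ k) * norm (t - c)"
  proof (rule field_differentiable_bound[of ?S])
    show "(g has_field_derivative g' s) (at s within ?S)" if "s \<in> ?S" for s
      using deriv[of s] sub that by (meson has_field_derivative_subset subsetD)
    show "norm (g' s) \<le> M * \<bar>t - c\<bar> ^ k" if "s \<in> ?S" for s
    proof -
      have "\<bar>g' s\<bar> \<le> M * \<bar>s - c\<bar> ^ k" using bound that sub by blast
      also have "\<dots> \<le> M * \<bar>t - c\<bar> ^ k" using that \<open>0 \<le> M\<close> by (intro mult_left_mono power_mono) auto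
      finally show ?thesis by simp
    qed
  qed auto
  then show ?thesis using \<open>g c = 0\<close> by (simp add: mult_ac)
qed

lemma taylor_cubic_remainder_bounds:
  fixes Df :: "nat \<Rightarrow> real \<Rightarrow> real"
  assumes deriv: "\<And>k t. k < 4 \<Longrightarrow> t \<in> {a..b} \<Longrightarrow>
                 (Df k has_real_derivative Df (Suc k) t) (at t within {a..b})"
    and bound4: "\<And>t. t \<in> {a..b} \<Longrightarrow> \<bar>Df 4 t\<bar> \<le> L"
    and c: "c \<in> {a..b}" and t: "t \<in> {a..b}"
  shows "\<bar>Df 1 t - (Df 1 c + Df 2 c * (t - c) + Df 3 c * (t - c)^2 / 2)\<bar> \<le> L * \<bar>t - c\<bar>^3"
    and "\<bar>Df 0 t - (Df 0 c + Df 1 c * (t - c) + Df 2 c * (t - c)^2 / 2 + Df 3 c * (t - c)^3 / 6)\<bar>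
           \<le> L * \<bar>t - c\<bar>^4"
proof -
  have "0 \<le> L" using bound4[OF c] by linarith
  define r3 where "r3 s = Df 3 s - Df 3 c" for s
  define r2 where "r2 s = Df 2 s - (Df 2 c + Df 3 c * (s - c))" for s
  define r1 where "r1 s = Df 1 s - (Df 1 c + Df 2 c * (s - c) + Df 3 c * (s - c)^2 / 2)" for s
  define r0 where
    "r0 s = Df 0 s - (Df 0 c + Df 1 c * (s - c) + Df 2 c * (s - c)^2 / 2 + Df 3 c * (s - c)^3 / 6)" for s
  have d3: "(r3 has_real_derivative Df 4 s) (at s within {a..b})" if "s \<in> {a..b}" for s
    unfolding r3_def using deriv[of 3 s] that
    by (auto intro!: derivative_eq_intros simp: eval_nat_numeral)
  have d2: "(r2 has_real_derivative r3 s) (at s within {a..b})" if "s \<in> {a..b}" for s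
    unfolding r2_def r3_def using deriv[of 2 s] that
    by (auto intro!: derivative_eq_intros simp: eval_nat_numeral)
  have d1: "(r1 has_real_derivative r2 s) (at s within {a..b})" if "s \<in> {a..b}" for s
    unfolding r1_def r2_def using deriv[of 1 s] that
    by (auto intro!: derivative_eq_intros simp: power2_eq_square field_simps eval_nat_numeral)
  have d0: "(r0 has_real_derivative r1 s) (at s within {a..b})" if "s \<in> {a..b}" for s
    unfolding r0_def r1_def using deriv[of 0 s] that
    by (auto intro!: derivative_eq_intros simp: power2_eq_square field_simps eval_nat_numeral)
  have b3: "\<bar>r3 s\<bar> \<le> L * \<bar>s - c\<bar> ^ Suc 0" if "s \<in> {a..b}" for s
    by (rule abs_le_of_deriv_bound_power[OF c that d3]) (auto simp: r3_def bound4 \<open>0 \<le> L\<close>)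
  have b2: "\<bar>r2 s\<bar> \<le> L * \<bar>s - c\<bar> ^ 2" if "s \<in> {a..b}" for s
    using abs_le_of_deriv_bound_power[OF c that d2 _ \<open>0 \<le> L\<close> b3] by (simp add: r2_def numeral_2_eq_2)
  have b1: "\<bar>r1 s\<bar> \<le> L * \<bar>s - c\<bar> ^ 3" if "s \<in> {a..b}" for s
    using abs_le_of_deriv_bound_power[OF c that d1 _ \<open>0 \<le> L\<close> b2] by (simp add: r1_def numeral_3_eq_3)
  have b0: "\<bar>r0 s\<bar> \<le> L * \<bar>s - c\<bar> ^ 4" if "s \<in> {a..b}" for s
    using abs_le_of_deriv_bound_power[OF c that d0 _ \<open>0 \<le> L\<close> b1] by (simp add: r0_def eval_nat_numeral)
  show "\<bar>Df 1 t - (Df 1 c + Df 2 c * (t - c) + Df 3 c * (t - c)^2 / 2)\<bar> \<le> L * \<bar>t - c\<bar>^3"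
    using b1[OF t] by (simp add: r1_def)
  show "\<bar>Df 0 t - (Df 0 c + Df 1 c * (t - c) + Df 2 c * (t - c)^2 / 2 + Df 3 c * (t - c)^3 / 6)\<bar>
           \<le> L * \<bar>t - c\<bar>^4"
    using b0[OF t] by (simp add: r0_def)
qed

lemma spline_equation_taylor_form:
  fixes u v fm f fp dfm df dfp ddf dddf :: real
  assumes "0 < u" "0 < v"
  shows "v/(u+v) * dfm + 2 * df + u/(u+v) * dfp - 3 * (v/(u+v) * ((f - fm) / u) + u/(u+v) * ((fp - f) / v))
    = v/(u+v) * (dfm - (df - ddf * u + dddf * u^2 / 2)) + u/(u+v) * (dfp - (df + ddf * v + dddf * v^2 / 2))
      + 3 * (v/(u+v)) * ((fm - (f - df * u + ddf * u^2 / 2 - dddf * u^3 / 6)) / u)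
      - 3 * (u/(u+v)) * ((fp - (f + df * v + ddf * v^2 / 2 + dddf * v^3 / 6)) / v)"
proof -
  have "u + v \<noteq> 0" using assms by simp
  \<comment> \<open>The Taylor polynomial terms cancel because the weights sum to 1 and \<open>v/(u+v) * u = u/(u+v) * v\<close>.\<close>
  then show ?thesis using assms by (simp add: divide_simps) algebra
qed

lemma abs_weighted_remainders_le:
  fixes lam mu r1 r2 r3 r4 M :: real
  assumes "0 \<le> lam" "0 \<le> mu" "lam + mu = 1"
    and "\<bar>r1\<bar> \<le> M" "\<bar>r2\<bar> \<le> M" "\<bar>r3\<bar> \<le> M" "\<bar>r4\<bar> \<le> M"
  shows "\<bar>lam * r1 + mu * r2 + 3 * lam * r3 - 3 * mu * r4\<bar> \<le> 4 * M"
proof -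
  have "\<bar>lam * r1 + mu * r2 + 3 * lam * r3 - 3 * mu * r4\<bar>
      \<le> \<bar>lam * r1\<bar> + \<bar>mu * r2\<bar> + \<bar>3 * lam * r3\<bar> + \<bar>3 * mu * r4\<bar>"
    using abs_triangle_ineq4 abs_triangle_ineq by (smt (verit))
  also have "\<dots> = lam * \<bar>r1\<bar> + mu * \<bar>r2\<bar> + 3 * lam * \<bar>r3\<bar> + 3 * mu * \<bar>r4\<bar>"
    using assms(1,2) by (simp add: abs_mult)
  also have "\<dots> \<le> lam * M + mu * M + 3 * lam * M + 3 * mu * M"
    using assms by (intro add_mono mult_left_mono) auto
  also have "\<dots> = 4 * (lam + mu) * M" by (simp add: algebra_simps)
  finally show ?thesis using \<open>lam + mu = 1\<close> by simp
qed

lemma spline_equation_consistency: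
  fixes Df :: "nat \<Rightarrow> real \<Rightarrow> real"
  assumes deriv: "\<And>k t. k < 4 \<Longrightarrow> t \<in> {a..b} \<Longrightarrow>
                 (Df k has_real_derivative Df (Suc k) t) (at t within {a..b})"
    and bound4: "\<And>t. t \<in> {a..b} \<Longrightarrow> \<bar>Df 4 t\<bar> \<le> L"
    and s: "s - u \<in> {a..b}" "s \<in> {a..b}" "s + v \<in> {a..b}"
    and u: "0 < u" "u \<le> h" and v: "0 < v" "v \<le> h"
  shows "\<bar>v/(u+v) * Df 1 (s - u) + 2 * Df 1 s + u/(u+v) * Df 1 (s + v)
          - 3 * (v/(u+v) * ((Df 0 s - Df 0 (s - u)) / u) + u/(u+v) * ((Df 0 (s + v) - Df 0 s) / v))\<bar>
         \<le> 4 * L * h^3"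
proof -
  have "0 \<le> L" using bound4[OF s(2)] by linarith
  have cube_le: "L * r^3 \<le> L * h^3" if "0 \<le> r" "r \<le> h" for r
    using that \<open>0 \<le> L\<close> by (intro mult_left_mono power_mono) auto
  have quartic_div_le: "\<bar>q / r\<bar> \<le> L * h^3" if "\<bar>q\<bar> \<le> L * r^4" "0 < r" "r \<le> h" for q r
  proof -
    have "\<bar>q\<bar> \<le> L * r^3 * r" using that by (simp add: eval_nat_numeral mult_ac)
    also have "\<dots> \<le> L * h^3 * r" using cube_le that by (intro mult_right_mono) auto
    finally show ?thesis using that by (simp add: divide_le_eq)
  qed
  note taylor_m = taylor_cubic_remainder_bounds[OF deriv bound4 s(2) s(1)]
  note taylor_p = taylor_cubic_remainder_bounds[OF deriv bound4 s(2) s(3)]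
  have weights: "0 \<le> v/(u+v)" "0 \<le> u/(u+v)" "v/(u+v) + u/(u+v) = 1"
    using u v by (simp_all add: divide_simps)
  have "\<bar>Df 1 (s - u) - (Df 1 s - Df 2 s * u + Df 3 s * u^2 / 2)\<bar> \<le> L * h^3"
    using taylor_m(1) cube_le[of u] u by simp
  moreover have "\<bar>Df 1 (s + v) - (Df 1 s + Df 2 s * v + Df 3 s * v^2 / 2)\<bar> \<le> L * h^3"
    using taylor_p(1) cube_le[of v] v by simp
  moreover have "\<bar>(Df 0 (s - u) - (Df 0 s - Df 1 s * u + Df 2 s * u^2 / 2 - Df 3 s * u^3 / 6)) / u\<bar>
      \<le> L * h^3"
    using taylor_m(2) u by (intro quartic_div_le) simp_all
  moreover have "\<bar>(Df 0 (s + v) - (Df 0 s + Df 1 s * v + Df 2 s * v^2 / 2 + Df 3 s * v^3 / 6)) / v\<bar>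
      \<le> L * h^3"
    using taylor_p(2) v by (intro quartic_div_le) simp_all
  ultimately show ?thesis
    using abs_weighted_remainders_le[OF weights]
    unfolding spline_equation_taylor_form[OF u(1) v(1), where ddf = "Df 2 s" and dddf = "Df 3 s"]
    by (simp only: mult.assoc)
qed

section \<open>Partitions\<close>

lemma partition_less:
  assumes "\<forall>i\<in>{1..<n}. x i < x (Suc i)" and "1 \<le> i" "i < j" "j \<le> n"
  shows "x i < (x j :: real)"
  by (rule lift_Suc_mono_less_ivl[of "{1..<n}"]) (use assms in auto)

lemma partition_le:
  assumes "\<forall>i\<in>{1..<n}. x i < x (Suc i)" and "1 \<le> i" "i \<le> j" "j \<le> n"
  shows "x i \<le> (x j :: real)"
  using partition_less[OF assms(1,2), of j] assms(3,4) by (cases "i = j") auto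

lemma step_pos:
  assumes "\<forall>i\<in>{1..<n}. x i < x (Suc i)" "1 \<le> i" "i < n"
  shows "0 < step x i"
  using assms by (simp add: step_def)

lemma piece_index_eq:
  assumes inc: "\<forall>i\<in>{1..<n}. x i < x (Suc i)" and j: "1 \<le> j" "j < n"
    and t: "x j \<le> t" "t < x (Suc j)"
  shows "piece_index x n t = j"
proof -
  have "t < x n" using partition_le[OF inc, of "Suc j" n] j t by auto
  moreover have "(GREATEST i. 1 \<le> i \<and> i < n \<and> x i \<le> t) = j"
  proof (rule Greatest_equality)
    show "1 \<le> j \<and> j < n \<and> x j \<le> t" using j t by simp
    show "i \<le> j" if "1 \<le> i \<and> i < n \<and> x i \<le> t" for i
    proof (rule ccontr)
      assume "\<not> i \<le> j"
      then have "x (Suc j) \<le> x i" using partition_le[OF inc, of "Suc j" i] that by auto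
      then show False using that t by simp
    qed
  qed
  ultimately show ?thesis unfolding piece_index_def by simp
qed

lemma piece_index_last:
  assumes inc: "\<forall>i\<in>{1..<n}. x i < x (Suc i)" and "2 \<le> n"
    and "x (n - 1) \<le> t" "t \<le> x n"
  shows "piece_index x n t = n - 1"
proof (cases "t = x n")
  case True
  then show ?thesis unfolding piece_index_def by simp
next
  case False
  then show ?thesis using piece_index_eq[OF inc, of "n - 1" t] assms by simp
qed

lemma piece_index_locally_constant_or_node:
  assumes inc: "\<forall>i\<in>{1..<n}. x i < x (Suc i)" and n: "2 \<le> n" and t: "t \<in> {x 1..x n}"
  obtains j d where "1 \<le> j" "j < n" "0 < d"
      "\<And>y. y \<in> {x 1..x n} \<Longrightarrow> dist y t < d \<Longrightarrow> piece_index x n y = j"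
    | j where "2 \<le> j" "j < n" "t = x j"
proof -
  define J where "J = {i. 1 \<le> i \<and> i < n \<and> x i \<le> t}"
  have "finite J" unfolding J_def by (rule finite_subset[of _ "{..<n}"]) auto
  moreover have "1 \<in> J" unfolding J_def using n t by auto
  ultimately have "Max J \<in> J" and jmax: "\<And>i. i \<in> J \<Longrightarrow> i \<le> Max J" by (auto intro: Max_in)
  define j where "j = Max J"
  have j: "1 \<le> j" "j < n" "x j \<le> t" using \<open>Max J \<in> J\<close> by (simp_all add: J_def j_def)
  consider "t = x j" "j = 1" | "t = x j" "2 \<le> j" | "x j < t" "Suc j < n" | "x j < t" "j = n - 1"
    using j by linarith
  then show ?thesis
  proof cases
    case 1
    have "x 1 < x 2" using partition_less[OF inc, of 1 2] n by simp
    moreover have "piece_index x n y = 1" if "y \<in> {x 1..x n}" "dist y t < x 2 - x 1" for y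
      using piece_index_eq[OF inc, of 1 y] that 1 n by (auto simp: dist_real_def numeral_2_eq_2)
    ultimately show ?thesis using that(1)[of 1 "x 2 - x 1"] n by simp
  next
    case 2
    then show ?thesis using that(2) j by blast
  next
    case 3
    have "Suc j \<notin> J" using jmax[of "Suc j"] by (auto simp: j_def)
    then have tS: "t < x (Suc j)" using 3 unfolding J_def by auto
    have "piece_index x n y = j" if "dist y t < min (t - x j) (x (Suc j) - t)" for y
      using piece_index_eq[OF inc j(1,2), of y] that by (auto simp: dist_real_def)
    then show ?thesis using that(1)[of j "min (t - x j) (x (Suc j) - t)"] j 3 tS by simp
  next
    case 4
    have "piece_index x n y = j" if "y \<in> {x 1..x n}" "dist y t < t - x j" for y
      using piece_index_last[OF inc n, of y] that 4 by (auto simp: dist_real_def)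
    then show ?thesis using that(1)[of j "t - x j"] j 4 by simp
  qed
qed

lemma step_le_hmax: "1 \<le> i \<Longrightarrow> i < n \<Longrightarrow> step x i \<le> hmax x n"
  unfolding hmax_def by (rule Max_ge) auto

lemma hmax_pos:
  assumes "\<forall>i\<in>{1..<n}. x i < x (Suc i)" "2 \<le> n"
  shows "0 < hmax x n"
  using step_pos[OF assms(1), of 1] step_le_hmax[of 1 n x] assms(2) by simp

section \<open>Error of the derivative values\<close>

text \<open>\<open>spline_lam x i\<close> and \<open>spline_mu x i\<close> are the paper's \<open>\<lambda>\<^sub>i\<^sub>-\<^sub>1\<close> and \<open>\<mu>\<^sub>i\<^sub>-\<^sub>1\<close>.\<close>

definition spline_lam :: "(nat \<Rightarrow> real) \<Rightarrow> nat \<Rightarrow> real" where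
  "spline_lam x i = step x i / (step x (i-1) + step x i)"

definition spline_mu :: "(nat \<Rightarrow> real) \<Rightarrow> nat \<Rightarrow> real" where
  "spline_mu x i = step x (i-1) / (step x (i-1) + step x i)"

definition spline_residual :: "(nat \<Rightarrow> real) \<Rightarrow> (nat \<Rightarrow> real) \<Rightarrow> (nat \<Rightarrow> real) \<Rightarrow> nat \<Rightarrow> real" where
  "spline_residual x fv dv i =
     (let m = (\<lambda>j. (fv (Suc j) - fv j) / step x j) in
        spline_lam x i * dv (i-1) + 2 * dv i + spline_mu x i * dv (Suc i)
        - 3 * (spline_lam x i * m (i-1) + spline_mu x i * m i))"

lemma spline_weights:
  assumes "\<forall>i\<in>{1..<n}. x i < x (Suc i)" "2 \<le> i" "i < n"
  shows "0 \<le> spline_lam x i" "0 \<le> spline_mu x i" "spline_lam x i + spline_mu x i = 1"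
proof -
  have "0 < step x (i-1)" "0 < step x i" using step_pos[OF assms(1)] assms(2,3) by auto
  then show "0 \<le> spline_lam x i" "0 \<le> spline_mu x i" "spline_lam x i + spline_mu x i = 1"
    unfolding spline_lam_def spline_mu_def by (simp_all add: divide_simps)
qed

lemma spline_residual_diff:
  "spline_residual x fv dv i - spline_residual x fv dv' i
     = spline_lam x i * (dv (i-1) - dv' (i-1)) + 2 * (dv i - dv' i) + spline_mu x i * (dv (Suc i) - dv' (Suc i))"
  unfolding spline_residual_def Let_def by (simp add: algebra_simps)

lemma spline_residual_exact_derivatives:
  fixes Df :: "nat \<Rightarrow> real \<Rightarrow> real"
  assumes deriv: "\<And>k t. k < 4 \<Longrightarrow> t \<in> {a..b} \<Longrightarrow>
                 (Df k has_real_derivative Df (Suc k) t) (at t within {a..b})"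
    and bound4: "\<And>t. t \<in> {a..b} \<Longrightarrow> \<bar>Df 4 t\<bar> \<le> L"
    and inc: "\<forall>i\<in>{1..<n}. x i < x (Suc i)" and "a \<le> x 1" "x n \<le> b"
    and i: "2 \<le> i" "i < n"
  shows "\<bar>spline_residual x (\<lambda>j. Df 0 (x j)) (\<lambda>j. Df 1 (x j)) i\<bar> \<le> 4 * L * hmax x n ^ 3"
proof -
  define u v where "u = step x (i-1)" and "v = step x i"
  have si: "Suc (i-1) = i" using i by simp
  have left: "x i - u = x (i-1)" and right: "x i + v = x (Suc i)"
    unfolding u_def v_def step_def si by simp_all
  have node: "x j \<in> {a..b}" if "1 \<le> j" "j \<le> n" for j
    using partition_le[OF inc, of 1 j] partition_le[OF inc, of j n] that assms(4,5) by auto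
  have "0 < u" "u \<le> hmax x n" "0 < v" "v \<le> hmax x n"
    using step_pos[OF inc] step_le_hmax i unfolding u_def v_def by auto
  moreover have "x i - u \<in> {a..b}" "x i \<in> {a..b}" "x i + v \<in> {a..b}"
    unfolding left right using node i by auto
  ultimately have "\<bar>v/(u+v) * Df 1 (x i - u) + 2 * Df 1 (x i) + u/(u+v) * Df 1 (x i + v)
      - 3 * (v/(u+v) * ((Df 0 (x i) - Df 0 (x i - u)) / u)
             + u/(u+v) * ((Df 0 (x i + v) - Df 0 (x i)) / v))\<bar> \<le> 4 * L * hmax x n ^ 3"
    by (intro spline_equation_consistency[OF deriv bound4]) auto
  then show ?thesis
    unfolding left right unfolding spline_residual_def spline_lam_def spline_mu_def Let_def si u_def v_def .
qed

lemma discrete_maximum_principle: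
  fixes e w lam mu :: "nat \<Rightarrow> real"
  assumes "2 \<le> n"
    and coeffs: "\<And>i. 2 \<le> i \<Longrightarrow> i < n \<Longrightarrow> i \<noteq> k \<Longrightarrow> 0 \<le> lam i \<and> 0 \<le> mu i \<and> lam i + mu i = 1"
    and sub: "\<And>i. 2 \<le> i \<Longrightarrow> i < n \<Longrightarrow> i \<noteq> k \<Longrightarrow> 2 * e i \<le> lam i * e (i-1) + mu i * e (Suc i) + R"
    and super: "\<And>i. 2 \<le> i \<Longrightarrow> i < n \<Longrightarrow> i \<noteq> k \<Longrightarrow> lam i * w (i-1) + mu i * w (Suc i) + R \<le> 2 * w i"
    and "e 1 \<le> w 1" "e n \<le> w n" "e k \<le> w k"
    and i: "i \<in> {1..n}"
  shows "e i \<le> w i"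
proof (rule ccontr)
  assume "\<not> e i \<le> w i"
  define M where "M = Max ((\<lambda>j. e j - w j) ` {1..n})"
  have le_M: "e j - w j \<le> M" if "j \<in> {1..n}" for j
    unfolding M_def using that by simp
  obtain m where m: "m \<in> {1..n}" "e m - w m = M"
    using Max_in[of "(\<lambda>j. e j - w j) ` {1..n}"] i unfolding M_def by fastforce
  have "0 < M" using le_M[OF i] \<open>\<not> e i \<le> w i\<close> by linarith
  then have "m \<noteq> 1" "m \<noteq> n" "m \<noteq> k" using m assms(5-7) by auto
  then have interior: "2 \<le> m" "m < n" "m \<noteq> k" using m by auto
  have "m - 1 \<in> {1..n}" "Suc m \<in> {1..n}" using interior by auto
  note c = coeffs[OF interior]
  have "2 * M \<le> lam m * (e (m-1) - w (m-1)) + mu m * (e (Suc m) - w (Suc m))"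
    using sub[OF interior] super[OF interior] m(2) by (simp add: algebra_simps)
  also have "\<dots> \<le> lam m * M + mu m * M"
    using c le_M[OF \<open>m - 1 \<in> {1..n}\<close>] le_M[OF \<open>Suc m \<in> {1..n}\<close>]
    by (intro add_mono mult_left_mono) auto
  also have "\<dots> = M" using c by (simp add: distrib_right[symmetric])
  finally show False using \<open>0 < M\<close> by simp
qed

definition barrier :: "real \<Rightarrow> real \<Rightarrow> nat \<Rightarrow> nat \<Rightarrow> real" where
  "barrier R B k i = R + B / 2 ^ nat \<bar>int i - int k\<bar>"

lemma barrier_supersolution:
  fixes lam mu R B :: real
  assumes "0 \<le> lam" "0 \<le> mu" "lam + mu = 1" "0 \<le> B"
  shows "lam * barrier R B k (i-1) + mu * barrier R B k (Suc i) + R \<le> 2 * barrier R B k i"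
proof -
  define d where "d = nat \<bar>int i - int k\<bar>"
  have neighbour: "barrier R B k j \<le> R + 2 * (B / 2 ^ d)" if "j = i - 1 \<or> j = Suc i" for j
  proof -
    have "d \<le> Suc (nat \<bar>int j - int k\<bar>)" using that unfolding d_def by auto
    then have "(2::real) ^ d \<le> 2 ^ Suc (nat \<bar>int j - int k\<bar>)" by (rule power_increasing) simp
    then show ?thesis
      using \<open>0 \<le> B\<close> unfolding barrier_def by (simp add: field_simps mult_left_mono)
  qed
  have "lam * barrier R B k (i-1) + mu * barrier R B k (Suc i)
      \<le> lam * (R + 2 * (B / 2 ^ d)) + mu * (R + 2 * (B / 2 ^ d))"
    using assms neighbour by (intro add_mono mult_left_mono) auto
  also have "\<dots> = R + 2 * (B / 2 ^ d)" using \<open>lam + mu = 1\<close> by (simp add: distrib_right[symmetric])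
  finally show ?thesis unfolding barrier_def d_def by simp
qed

lemma spline_error_recursion:
  fixes Df :: "nat \<Rightarrow> real \<Rightarrow> real" and dv :: "nat \<Rightarrow> real"
  assumes deriv: "\<And>k t. k < 4 \<Longrightarrow> t \<in> {a..b} \<Longrightarrow>
                 (Df k has_real_derivative Df (Suc k) t) (at t within {a..b})"
    and bound4: "\<And>t. t \<in> {a..b} \<Longrightarrow> \<bar>Df 4 t\<bar> \<le> L"
    and inc: "\<forall>i\<in>{1..<n}. x i < x (Suc i)" and "a \<le> x 1" "x n \<le> b"
    and j: "2 \<le> j" "j < n" and spline: "spline_residual x (\<lambda>i. Df 0 (x i)) dv j = 0"
  defines "e \<equiv> \<lambda>i. dv i - Df 1 (x i)"
  shows "2 * \<bar>e j\<bar> \<le> spline_lam x j * \<bar>e (j-1)\<bar> + spline_mu x j * \<bar>e (Suc j)\<bar> + 4 * L * hmax x n ^ 3"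
proof -
  have "\<bar>spline_lam x j * e (j-1) + 2 * e j + spline_mu x j * e (Suc j)\<bar> \<le> 4 * L * hmax x n ^ 3"
    using spline_residual_diff[of x "\<lambda>i. Df 0 (x i)" dv j "\<lambda>i. Df 1 (x i)"] spline
      spline_residual_exact_derivatives[OF deriv bound4 inc assms(4,5) j]
    unfolding e_def by simp
  moreover have "\<bar>spline_lam x j * e (j-1)\<bar> = spline_lam x j * \<bar>e (j-1)\<bar>"
    and "\<bar>spline_mu x j * e (Suc j)\<bar> = spline_mu x j * \<bar>e (Suc j)\<bar>"
    using spline_weights[OF inc j] by (simp_all add: abs_mult)
  ultimately show ?thesis by linarith
qed

lemma spline_derivative_error_le_barrier:
  fixes Df :: "nat \<Rightarrow> real \<Rightarrow> real" and dv :: "nat \<Rightarrow> real"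
  assumes deriv: "\<And>k t. k < 4 \<Longrightarrow> t \<in> {a..b} \<Longrightarrow>
                 (Df k has_real_derivative Df (Suc k) t) (at t within {a..b})"
    and bound4: "\<And>t. t \<in> {a..b} \<Longrightarrow> \<bar>Df 4 t\<bar> \<le> L"
    and inc: "\<forall>i\<in>{1..<n}. x i < x (Suc i)" and n: "2 \<le> n" and "a \<le> x 1" "x n \<le> b"
    and spline: "\<And>i. 2 \<le> i \<Longrightarrow> i < n \<Longrightarrow> i \<noteq> k \<Longrightarrow> spline_residual x (\<lambda>j. Df 0 (x j)) dv i = 0"
    and "dv 1 = Df 1 (x 1)" "dv n = Df 1 (x n)" and at_k: "\<bar>dv k - Df 1 (x k)\<bar> \<le> B"
    and i: "i \<in> {1..n}"
  shows "\<bar>dv i - Df 1 (x i)\<bar> \<le> barrier (4 * L * hmax x n ^ 3) B k i"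
proof -
  define R where "R = 4 * L * hmax x n ^ 3"
  have "0 \<le> B" using at_k by linarith
  have "x 1 \<in> {a..b}" using partition_le[OF inc, of 1 n] n assms(5,6) by auto
  then have "0 \<le> L" using bound4 by fastforce
  then have "0 \<le> R" using hmax_pos[OF inc n] unfolding R_def by simp
  show ?thesis
    unfolding R_def[symmetric]
  proof (rule discrete_maximum_principle[OF n, where lam = "spline_lam x" and mu = "spline_mu x"])
    show "0 \<le> spline_lam x j \<and> 0 \<le> spline_mu x j \<and> spline_lam x j + spline_mu x j = 1"
      if "2 \<le> j" "j < n" for j
      using spline_weights[OF inc that] by blast
    show "2 * \<bar>dv j - Df 1 (x j)\<bar> \<le> spline_lam x j * \<bar>dv (j-1) - Df 1 (x (j-1))\<bar>
        + spline_mu x j * \<bar>dv (Suc j) - Df 1 (x (Suc j))\<bar> + R"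
      if "2 \<le> j" "j < n" "j \<noteq> k" for j
      using spline_error_recursion[OF deriv bound4 inc assms(5,6) that(1,2) spline[OF that]]
      unfolding R_def .
    show "spline_lam x j * barrier R B k (j-1) + spline_mu x j * barrier R B k (Suc j) + R
        \<le> 2 * barrier R B k j" if "2 \<le> j" "j < n" for j
      using spline_weights[OF inc that] \<open>0 \<le> B\<close> by (intro barrier_supersolution)
  qed (use assms(8,9) at_k \<open>0 \<le> R\<close> \<open>0 \<le> B\<close> i in \<open>simp_all add: barrier_def\<close>)
qed

lemma barrier_le_near:
  assumes h: "0 < h" "h \<le> 1" and "0 \<le> L" "0 \<le> T" "p \<le> 3"
  shows "barrier (4 * L * h ^ 3) (T * h powr p) k i \<le> (4 * L + T) * h powr p"
proof -
  have "h ^ 3 \<le> h powr p"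
    using powr_realpow[OF h(1), of 3] powr_mono'[of p 3 h] h \<open>p \<le> 3\<close> by simp
  moreover have "h powr p / 2 ^ nat \<bar>int i - int k\<bar> \<le> h powr p"
    by (simp add: divide_le_eq mult_le_cancel_left1)
  ultimately have "4 * L * h ^ 3 + T * (h powr p / 2 ^ nat \<bar>int i - int k\<bar>)
      \<le> 4 * L * h powr p + T * h powr p"
    using \<open>0 \<le> L\<close> \<open>0 \<le> T\<close> by (intro add_mono mult_left_mono) auto
  then show ?thesis unfolding barrier_def by (simp add: algebra_simps)
qed

lemma barrier_le_far:
  assumes h: "0 < h" "h \<le> 1" and "0 \<le> L" "0 \<le> T"
    and decayed: "p \<le> 3 \<Longrightarrow> 1 / 2 ^ nat \<bar>int i - int k\<bar> \<le> h"
  shows "barrier (4 * L * h ^ 3) (T * h powr p) k i \<le> (4 * L + T) * h powr (min 3 (p + 1))"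
proof -
  define d where "d = nat \<bar>int i - int k\<bar>"
  have "h ^ 3 \<le> h powr (min 3 (p + 1))"
    using powr_realpow[OF h(1), of 3] powr_mono'[of "min 3 (p + 1)" 3 h] h by simp
  moreover have "h powr p / 2 ^ d \<le> h powr (min 3 (p + 1))"
  proof (cases "p \<le> 3")
    case True
    then have "h powr p * (1 / 2 ^ d) \<le> h powr p * h"
      using decayed unfolding d_def by (intro mult_left_mono) auto
    also have "\<dots> = h powr (p + 1)" using h by (simp add: powr_add)
    also have "\<dots> \<le> h powr (min 3 (p + 1))" using h by (intro powr_mono') auto
    finally show ?thesis by simp
  next
    case False
    have "h powr p / 2 ^ d \<le> h powr p" by (simp add: divide_le_eq mult_le_cancel_left1)
    also have "\<dots> \<le> h powr 3" using h False by (intro powr_mono') auto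
    finally show ?thesis using False by simp
  qed
  ultimately have "4 * L * h ^ 3 + T * (h powr p / 2 ^ d)
      \<le> 4 * L * h powr (min 3 (p + 1)) + T * h powr (min 3 (p + 1))"
    using \<open>0 \<le> L\<close> \<open>0 \<le> T\<close> by (intro add_mono mult_left_mono) auto
  then show ?thesis unfolding barrier_def d_def[symmetric] by (simp add: algebra_simps)
qed

lemma three_zones_by_distance:
  fixes k k0 :: nat
  assumes "0 < k" "0 < k0"
  obtains l0 l1 where "l0 < k" "k < l1"
    and "\<And>i. 1 \<le> i \<Longrightarrow> i \<le> l0 \<or> l1 \<le> i \<Longrightarrow> k0 \<le> nat \<bar>int i - int k\<bar>"
    and "\<And>i. l0 < i \<Longrightarrow> i < l1 \<Longrightarrow> nat \<bar>int i - int k\<bar> < k0"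
  by (rule that[of "k - k0" "k + k0"]) (use assms in auto)

lemma spline_derivative_error_zones:
  fixes e :: "nat \<Rightarrow> real" and h L T p :: real
  assumes h: "0 < h" "h < 1" and "0 \<le> L" "0 \<le> T" "0 < k"
    and bound: "\<And>i. 1 \<le> i \<Longrightarrow> i \<le> n \<Longrightarrow> \<bar>e i\<bar> \<le> barrier (4 * L * h ^ 3) (T * h powr p) k i"
    and at_k: "\<bar>e k\<bar> \<le> T * h powr p"
  shows "\<exists>l0 l1. l0 < k \<and> k < l1 \<and> (\<forall>i. 2 \<le> i \<and> i \<le> n - 1 \<longrightarrow>
          (i \<le> l0 \<longrightarrow> \<bar>e i\<bar> \<le> (4 * L + T) * h powr (min 3 (p + 1))) \<and>
          (l0 < i \<and> i < l1 \<longrightarrow> \<bar>e i\<bar> \<le> (4 * L + T) * h powr p) \<and>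
          (l1 \<le> i \<longrightarrow> \<bar>e i\<bar> \<le> (4 * L + T) * h powr (min 3 (p + 1))))"
proof -
  obtain N where "(1/2) ^ N < h" using real_arch_pow_inv[OF h(1), of "1/2"] by auto
  \<comment> \<open>For \<open>p > 3\<close> the middle zone is \<open>{k}\<close> alone; for \<open>p \<le> 3\<close> it reaches \<open>k0\<close> nodes to each
    side, beyond which the perturbation has decayed by \<open>1 / 2 ^ k0 \<le> h\<close>.\<close>
  define k0 where "k0 = (if p \<le> 3 then Suc N else 1)"
  have far: "\<bar>e i\<bar> \<le> (4 * L + T) * h powr (min 3 (p + 1))"
    if i: "1 \<le> i" "i \<le> n" and d: "k0 \<le> nat \<bar>int i - int k\<bar>" for i
  proof -
    have "1 / 2 ^ nat \<bar>int i - int k\<bar> \<le> h" if "p \<le> 3"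
    proof -
      have "1 / 2 ^ nat \<bar>int i - int k\<bar> \<le> 1 / (2::real) ^ k0" using d by (simp add: frac_le)
      also have "\<dots> \<le> (1/2) ^ N" using that unfolding k0_def by (simp add: power_divide divide_simps)
      finally show ?thesis using \<open>(1/2) ^ N < h\<close> by linarith
    qed
    then show ?thesis using bound[OF i] barrier_le_far[of h L T p i k] h assms(3,4) by linarith
  qed
  have near: "\<bar>e i\<bar> \<le> (4 * L + T) * h powr p"
    if i: "1 \<le> i" "i \<le> n" and d: "nat \<bar>int i - int k\<bar> < k0" for i
  proof (cases "p \<le> 3")
    case True
    then show ?thesis using bound[OF i] barrier_le_near[of h L T p k i] h assms(3,4) by linarith
  next
    case False
    then have "i = k" using d unfolding k0_def by simp
    moreover have "T * h powr p \<le> (4 * L + T) * h powr p" using \<open>0 \<le> L\<close> by (intro mult_right_mono) auto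
    ultimately show ?thesis using at_k by simp
  qed
  have "0 < k0" unfolding k0_def by simp
  then obtain l0 l1 where zones: "l0 < k" "k < l1"
    "\<And>i. 1 \<le> i \<Longrightarrow> i \<le> l0 \<or> l1 \<le> i \<Longrightarrow> k0 \<le> nat \<bar>int i - int k\<bar>"
    "\<And>i. l0 < i \<Longrightarrow> i < l1 \<Longrightarrow> nat \<bar>int i - int k\<bar> < k0"
    using three_zones_by_distance[OF \<open>0 < k\<close>] by blast
  show ?thesis
  proof (intro exI conjI allI impI)
    fix i assume "2 \<le> i \<and> i \<le> n - 1"
    then have i: "1 \<le> i" "i \<le> n" by auto
    show "\<bar>e i\<bar> \<le> (4 * L + T) * h powr (min 3 (p + 1))" if "i \<le> l0"
      using far[OF i zones(3)] i that by blast
    show "\<bar>e i\<bar> \<le> (4 * L + T) * h powr (min 3 (p + 1))" if "l1 \<le> i"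
      using far[OF i zones(3)] i that by blast
    show "\<bar>e i\<bar> \<le> (4 * L + T) * h powr p" if "l0 < i \<and> i < l1"
      using near[OF i zones(4)] that by blast
  qed (use zones in auto)
qed

section \<open>Smoothness of the piecewise Hermite interpolant\<close>

definition hermite_piece_d1 ::
  "(nat \<Rightarrow> real) \<Rightarrow> (nat \<Rightarrow> real) \<Rightarrow> (nat \<Rightarrow> real) \<Rightarrow> nat \<Rightarrow> real \<Rightarrow> real" where
  "hermite_piece_d1 x fv dv i t =
     (let h = step x i; s = (t - x i) / h in
        (fv i * (6 * s^2 - 6 * s) + h * dv i * (3 * s^2 - 4 * s + 1)
       + fv (Suc i) * (6 * s - 6 * s^2) + h * dv (Suc i) * (3 * s^2 - 2 * s)) / h)"

definition hermite_piece_d2 ::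
  "(nat \<Rightarrow> real) \<Rightarrow> (nat \<Rightarrow> real) \<Rightarrow> (nat \<Rightarrow> real) \<Rightarrow> nat \<Rightarrow> real \<Rightarrow> real" where
  "hermite_piece_d2 x fv dv i t =
     (let h = step x i; s = (t - x i) / h in
        (fv i * (12 * s - 6) + h * dv i * (6 * s - 4)
       + fv (Suc i) * (6 - 12 * s) + h * dv (Suc i) * (6 * s - 2)) / h^2)"

lemma has_real_derivative_hermite_piece:
  "(hermite_piece x fv dv i has_real_derivative hermite_piece_d1 x fv dv i t) (at t)"
proof (cases "step x i = 0")
  case True
  then have "hermite_piece x fv dv i = (\<lambda>_. fv i)"
    by (simp add: hermite_piece_def fun_eq_iff)
  with True show ?thesis by (simp add: hermite_piece_d1_def)
next
  case False
  then show ?thesis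
    unfolding hermite_piece_def hermite_piece_d1_def Let_def
    by (auto intro!: derivative_eq_intros simp: field_simps power2_eq_square power3_eq_cube)
qed

lemma has_real_derivative_hermite_piece_d1:
  "(hermite_piece_d1 x fv dv i has_real_derivative hermite_piece_d2 x fv dv i t) (at t)"
proof (cases "step x i = 0")
  case True
  then have "hermite_piece_d1 x fv dv i = (\<lambda>_. 0)"
    by (simp add: hermite_piece_d1_def fun_eq_iff)
  with True show ?thesis by (simp add: hermite_piece_d2_def)
next
  case False
  then show ?thesis
    unfolding hermite_piece_d1_def hermite_piece_d2_def Let_def
    by (auto intro!: derivative_eq_intros simp: field_simps power2_eq_square)
qed

lemma isCont_hermite_piece_d2: "isCont (hermite_piece_d2 x fv dv i) t"
proof (cases "step x i = 0")
  case True
  then have "hermite_piece_d2 x fv dv i = (\<lambda>_. 0)"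
    by (simp add: hermite_piece_d2_def fun_eq_iff)
  then show ?thesis by simp
next
  case False
  then show ?thesis
    unfolding hermite_piece_d2_def Let_def by (auto intro!: continuous_intros)
qed

lemma hermite_piece_endpoints:
  assumes "step x i \<noteq> 0"
  shows "hermite_piece x fv dv i (x i) = fv i"
    and "hermite_piece x fv dv i (x (Suc i)) = fv (Suc i)"
    and "hermite_piece_d1 x fv dv i (x i) = dv i"
    and "hermite_piece_d1 x fv dv i (x (Suc i)) = dv (Suc i)"
    and "hermite_piece_d2 x fv dv i (x i)
           = (6 * fv (Suc i) - 6 * fv i - 4 * step x i * dv i - 2 * step x i * dv (Suc i)) / (step x i)^2"
    and "hermite_piece_d2 x fv dv i (x (Suc i))
           = (6 * fv i - 6 * fv (Suc i) + 2 * step x i * dv i + 4 * step x i * dv (Suc i)) / (step x i)^2"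
  using assms
  unfolding hermite_piece_def hermite_piece_d1_def hermite_piece_d2_def Let_def step_def[symmetric]
  by (simp_all add: algebra_simps)

lemma hermite_d2_jump_eq:
  fixes u v fm f fp dm d dp :: real
  assumes "0 < u" "0 < v"
  shows "(6 * fm - 6 * f + 2 * u * dm + 4 * u * d) / u^2 - (6 * fp - 6 * f - 4 * v * d - 2 * v * dp) / v^2
    = 2 * (u + v) / (u * v) * (v/(u+v) * dm + 2 * d + u/(u+v) * dp
        - 3 * (v/(u+v) * ((f - fm) / u) + u/(u+v) * ((fp - f) / v)))"
proof -
  have "u + v \<noteq> 0" using assms by simp
  then show ?thesis using assms by (simp add: divide_simps) algebra
qed

lemma hermite_piece_d2_match_at_node:
  assumes "0 < j" "0 < step x (j-1)" "0 < step x j" "spline_residual x fv dv j = 0"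
  shows "hermite_piece_d2 x fv dv (j-1) (x j) = hermite_piece_d2 x fv dv j (x j)"
proof -
  define u v where "u = step x (j-1)" and "v = step x j"
  have j: "Suc (j-1) = j" using assms(1) by simp
  have u: "0 < u" and v: "0 < v" using assms(2,3) by (simp_all add: u_def v_def)
  have left: "hermite_piece_d2 x fv dv (j-1) (x j)
      = (6 * fv (j-1) - 6 * fv j + 2 * u * dv (j-1) + 4 * u * dv j) / u^2"
    using hermite_piece_endpoints(6)[of x "j-1" fv dv] assms(2) unfolding j u_def by force
  have right: "hermite_piece_d2 x fv dv j (x j)
      = (6 * fv (Suc j) - 6 * fv j - 4 * v * dv j - 2 * v * dv (Suc j)) / v^2"
    using hermite_piece_endpoints(5)[of x j fv dv] assms(3) unfolding v_def by force
  have residual: "spline_residual x fv dv j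
      = v/(u+v) * dv (j-1) + 2 * dv j + u/(u+v) * dv (Suc j)
        - 3 * (v/(u+v) * ((fv j - fv (j-1)) / u) + u/(u+v) * ((fv (Suc j) - fv j) / v))"
    unfolding spline_residual_def spline_lam_def spline_mu_def Let_def j u_def v_def ..
  have "hermite_piece_d2 x fv dv (j-1) (x j) - hermite_piece_d2 x fv dv j (x j)
      = 2 * (u + v) / (u * v) * spline_residual x fv dv j"
    unfolding left right residual by (rule hermite_d2_jump_eq[OF u v])
  then show ?thesis using assms(4) by simp
qed

definition pchip_d1 :: "(nat \<Rightarrow> real) \<Rightarrow> nat \<Rightarrow> (nat \<Rightarrow> real) \<Rightarrow> (nat \<Rightarrow> real) \<Rightarrow> real \<Rightarrow> real" where
  "pchip_d1 x n fv dv t = hermite_piece_d1 x fv dv (piece_index x n t) t"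

definition pchip_d2 :: "(nat \<Rightarrow> real) \<Rightarrow> nat \<Rightarrow> (nat \<Rightarrow> real) \<Rightarrow> (nat \<Rightarrow> real) \<Rightarrow> real \<Rightarrow> real" where
  "pchip_d2 x n fv dv t = hermite_piece_d2 x fv dv (piece_index x n t) t"

lemma tendsto_at_piecewise:
  fixes F g h :: "real \<Rightarrow> real"
  assumes "(g \<longlongrightarrow> l) (at c)" "(h \<longlongrightarrow> l) (at c)" "lo < c" "c < hi"
    and "\<And>t. lo < t \<Longrightarrow> t < c \<Longrightarrow> F t = g t"
    and "\<And>t. c < t \<Longrightarrow> t < hi \<Longrightarrow> F t = h t"
  shows "(F \<longlongrightarrow> l) (at c)"
  unfolding filterlim_at_split
proof
  have "\<forall>\<^sub>F t in at_left c. g t = F t"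
    using eventually_at_left_real[OF \<open>lo < c\<close>] by eventually_elim (use assms(5) in auto)
  moreover have "(g \<longlongrightarrow> l) (at_left c)"
    using assms(1) by (rule tendsto_mono[OF at_le, rotated]) simp
  ultimately show "(F \<longlongrightarrow> l) (at_left c)" by (rule tendsto_cong[THEN iffD1])
next
  have "\<forall>\<^sub>F t in at_right c. h t = F t"
    using eventually_at_right_real[OF \<open>c < hi\<close>] by eventually_elim (use assms(6) in auto)
  moreover have "(h \<longlongrightarrow> l) (at_right c)"
    using assms(2) by (rule tendsto_mono[OF at_le, rotated]) simp
  ultimately show "(F \<longlongrightarrow> l) (at_right c)" by (rule tendsto_cong[THEN iffD1])
qed

lemma has_real_derivative_at_piecewise:
  fixes F g h :: "real \<Rightarrow> real"
  assumes "(g has_real_derivative D) (at c)" "(h has_real_derivative D) (at c)" "lo < c" "c < hi"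
    and "\<And>t. lo < t \<Longrightarrow> t < c \<Longrightarrow> F t = g t"
    and "\<And>t. c \<le> t \<Longrightarrow> t < hi \<Longrightarrow> F t = h t"
    and "g c = h c"
  shows "(F has_real_derivative D) (at c)"
  unfolding has_field_derivative_iff
proof (rule tendsto_at_piecewise[where lo = lo and hi = hi])
  show "((\<lambda>y. (g y - g c) / (y - c)) \<longlongrightarrow> D) (at c)"
    using assms(1) unfolding has_field_derivative_iff .
  show "((\<lambda>y. (h y - h c) / (y - c)) \<longlongrightarrow> D) (at c)"
    using assms(2) unfolding has_field_derivative_iff .
qed (use assms in auto)

lemma pchip_C2_near_piece:
  assumes "0 < d" "t \<in> S" and near: "\<And>y. y \<in> S \<Longrightarrow> dist y t < d \<Longrightarrow> piece_index x n y = j"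
  shows "(pchip x n fv dv has_real_derivative pchip_d1 x n fv dv t) (at t within S)"
    and "(pchip_d1 x n fv dv has_real_derivative pchip_d2 x n fv dv t) (at t within S)"
    and "continuous (at t within S) (pchip_d2 x n fv dv)"
proof -
  have j: "piece_index x n t = j" using near[OF \<open>t \<in> S\<close>] \<open>0 < d\<close> by simp
  show "(pchip x n fv dv has_real_derivative pchip_d1 x n fv dv t) (at t within S)"
  proof (rule has_field_derivative_transform_within[OF _ \<open>0 < d\<close> \<open>t \<in> S\<close>])
    show "(hermite_piece x fv dv j has_real_derivative pchip_d1 x n fv dv t) (at t within S)"
      unfolding pchip_d1_def j by (rule has_field_derivative_at_within[OF has_real_derivative_hermite_piece])
  qed (simp add: pchip_def near)
  show "(pchip_d1 x n fv dv has_real_derivative pchip_d2 x n fv dv t) (at t within S)"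
  proof (rule has_field_derivative_transform_within[OF _ \<open>0 < d\<close> \<open>t \<in> S\<close>])
    show "(hermite_piece_d1 x fv dv j has_real_derivative pchip_d2 x n fv dv t) (at t within S)"
      unfolding pchip_d2_def j by (rule has_field_derivative_at_within[OF has_real_derivative_hermite_piece_d1])
  qed (simp add: pchip_d1_def near)
  show "continuous (at t within S) (pchip_d2 x n fv dv)"
  proof (rule continuous_transform_within[OF _ \<open>0 < d\<close> \<open>t \<in> S\<close>])
    show "continuous (at t within S) (hermite_piece_d2 x fv dv j)"
      using isCont_hermite_piece_d2 by (rule continuous_at_imp_continuous_at_within)
  qed (simp add: pchip_d2_def near)
qed

lemma pchip_C2_at_node:
  assumes inc: "\<forall>i\<in>{1..<n}. x i < x (Suc i)" and j: "2 \<le> j" "j < n"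
    and match: "hermite_piece_d2 x fv dv (j-1) (x j) = hermite_piece_d2 x fv dv j (x j)"
  shows "(pchip x n fv dv has_real_derivative pchip_d1 x n fv dv (x j)) (at (x j))"
    and "(pchip_d1 x n fv dv has_real_derivative pchip_d2 x n fv dv (x j)) (at (x j))"
    and "isCont (pchip_d2 x n fv dv) (x j)"
proof -
  have sj: "Suc (j-1) = j" using j by simp
  have lo: "x (j-1) < x j" and hi: "x j < x (Suc j)"
    using partition_less[OF inc, of "j-1" j] partition_less[OF inc, of j "Suc j"] j by auto
  have step: "step x (j-1) \<noteq> 0" "step x j \<noteq> 0" using lo hi sj by (simp_all add: step_def)
  have left: "piece_index x n y = j - 1" if "x (j-1) < y" "y < x j" for y
    using piece_index_eq[OF inc, of "j-1" y] that j sj by auto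
  have right: "piece_index x n y = j" if "x j \<le> y" "y < x (Suc j)" for y
    using piece_index_eq[OF inc, of j y] that j by auto
  note ends_left = hermite_piece_endpoints[OF step(1), unfolded sj]
  note ends_right = hermite_piece_endpoints[OF step(2)]
  have at_node: "piece_index x n (x j) = j" using right hi by simp
  have d0_match: "hermite_piece x fv dv (j-1) (x j) = hermite_piece x fv dv j (x j)"
    using ends_left(2) ends_right(1) by simp
  have d1_match: "hermite_piece_d1 x fv dv (j-1) (x j) = hermite_piece_d1 x fv dv j (x j)"
    using ends_left(4) ends_right(3) by simp
  show "(pchip x n fv dv has_real_derivative pchip_d1 x n fv dv (x j)) (at (x j))"
    unfolding pchip_d1_def at_node
  proof (rule has_real_derivative_at_piecewise[OF _ has_real_derivative_hermite_piece lo hi])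
    show "(hermite_piece x fv dv (j-1) has_real_derivative hermite_piece_d1 x fv dv j (x j)) (at (x j))"
      using has_real_derivative_hermite_piece[of x fv dv "j-1" "x j"] unfolding d1_match .
  qed (use d0_match in \<open>auto simp: pchip_def left right\<close>)
  show "(pchip_d1 x n fv dv has_real_derivative pchip_d2 x n fv dv (x j)) (at (x j))"
    unfolding pchip_d2_def at_node
  proof (rule has_real_derivative_at_piecewise[OF _ has_real_derivative_hermite_piece_d1 lo hi])
    show "(hermite_piece_d1 x fv dv (j-1) has_real_derivative hermite_piece_d2 x fv dv j (x j)) (at (x j))"
      using has_real_derivative_hermite_piece_d1[of x fv dv "j-1" "x j"] unfolding match .
  qed (use d1_match in \<open>auto simp: pchip_d1_def left right\<close>)
  show "isCont (pchip_d2 x n fv dv) (x j)"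
    unfolding isCont_def pchip_d2_def at_node
  proof (rule tendsto_at_piecewise[OF _ _ lo hi])
    show "(hermite_piece_d2 x fv dv (j-1) \<longlongrightarrow> hermite_piece_d2 x fv dv j (x j)) (at (x j))"
      using isCont_hermite_piece_d2[of "x j" x fv dv "j-1"] unfolding isCont_def match .
    show "(hermite_piece_d2 x fv dv j \<longlongrightarrow> hermite_piece_d2 x fv dv j (x j)) (at (x j))"
      using isCont_hermite_piece_d2 by (simp add: isCont_def)
  qed (use match in \<open>auto simp: left right\<close>)
qed

lemma pchip_C2_except_node:
  assumes inc: "\<forall>i\<in>{1..<n}. x i < x (Suc i)" and n: "2 \<le> n"
    and spline: "\<And>j. 2 \<le> j \<Longrightarrow> j < n \<Longrightarrow> j \<noteq> k \<Longrightarrow> spline_residual x fv dv j = 0"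
    and S: "S = {x 1..x n} - {x k}" and t: "t \<in> S"
  shows "(pchip x n fv dv has_real_derivative pchip_d1 x n fv dv t) (at t within S)
       \<and> (pchip_d1 x n fv dv has_real_derivative pchip_d2 x n fv dv t) (at t within S)
       \<and> continuous (at t within S) (pchip_d2 x n fv dv)"
proof -
  have "t \<in> {x 1..x n}" using t S by blast
  then show ?thesis
  proof (rule piece_index_locally_constant_or_node[OF inc n])
    fix j d
    assume "0 < d" and near: "\<And>y. y \<in> {x 1..x n} \<Longrightarrow> dist y t < d \<Longrightarrow> piece_index x n y = j"
    have "piece_index x n y = j" if "y \<in> S" "dist y t < d" for y
      by (rule near) (use that S in auto)
    from pchip_C2_near_piece[OF \<open>0 < d\<close> t this] show ?thesis by blast
  next
    fix j assume j: "2 \<le> j" "j < n" and "t = x j"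
    then have "j \<noteq> k" using t S by blast
    then have "spline_residual x fv dv j = 0" using spline j by blast
    moreover have "0 < step x (j-1)" "0 < step x j" using step_pos[OF inc] j by auto
    ultimately have "hermite_piece_d2 x fv dv (j-1) (x j) = hermite_piece_d2 x fv dv j (x j)"
      using j by (intro hermite_piece_d2_match_at_node) auto
    from pchip_C2_at_node[OF inc j this] show ?thesis
      unfolding \<open>t = x j\<close>
      by (simp add: has_field_derivative_at_within continuous_at_imp_continuous_at_within)
  qed
qed

theorem corollary1:
  fixes a b L K T p :: real
    and Df :: "nat \<Rightarrow> real \<Rightarrow> real"
  assumes "a < b"
    and deriv: "\<And>k t. k < 4 \<Longrightarrow> t \<in> {a..b} \<Longrightarrow>
                 (Df k has_real_derivative Df (Suc k) t) (at t within {a..b})"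
    and cont4: "continuous_on {a..b} (Df 4)"
    and "L > 0" and bound4: "\<And>t. t \<in> {a..b} \<Longrightarrow> \<bar>Df 4 t\<bar> \<le> L"
    and "K > 0" and "T > 0" and "p > 0"
  shows "\<exists>C > 0. \<forall>(n::nat) (x::nat \<Rightarrow> real) (i0::nat) (ftil::real) (fdot::nat \<Rightarrow> real).
    2 \<le> n \<and> x 1 = a \<and> x n = b \<and> (\<forall>i\<in>{1..<n}. x i < x (Suc i)) \<and>
    hmax x n < 1 \<and>
    3 - log 2 (hmax x n) < real i0 \<and> real i0 < real (n - 1) + log 2 (hmax x n) \<and>
    \<bar>Df 1 (x i0) - ftil\<bar> = T * hmax x n powr p \<and>
    (\<forall>i\<in>{1..n-1}. hmax x n / step x i \<le> K) \<and>
    fdot 1 = Df 1 (x 1) \<and> fdot i0 = ftil \<and> fdot n = Df 1 (x n) \<and>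
    (\<forall>i. 2 \<le> i \<and> i \<le> n - 1 \<and> i \<noteq> i0 \<longrightarrow>
       (let lam = step x i / (step x (i-1) + step x i);
            mu = step x (i-1) / (step x (i-1) + step x i);
            m = (\<lambda>j. (Df 0 (x (Suc j)) - Df 0 (x j)) / step x j) in
        lam * fdot (i-1) + 2 * fdot i + mu * fdot (Suc i)
          = 3 * (lam * m (i-1) + mu * m i)))
    \<longrightarrow>
    (\<exists>l0 l1 :: nat. l0 < i0 \<and> i0 < l1 \<and>
       (\<forall>i. 2 \<le> i \<and> i \<le> n - 1 \<longrightarrow>
          (i \<le> l0 \<longrightarrow> \<bar>fdot i - Df 1 (x i)\<bar> \<le> C * hmax x n powr (min 3 (p + 1))) \<and>
          (l0 < i \<and> i < l1 \<longrightarrow> \<bar>fdot i - Df 1 (x i)\<bar> \<le> C * hmax x n powr p) \<and>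
          (l1 \<le> i \<longrightarrow> \<bar>fdot i - Df 1 (x i)\<bar> \<le> C * hmax x n powr (min 3 (p + 1))))) \<and>
    (let S = {x 1..x n} - {x i0}; P = pchip x n (\<lambda>j. Df 0 (x j)) fdot in
       \<exists>P1 P2. (\<forall>t\<in>S. (P has_real_derivative P1 t) (at t within S) \<and>
                        (P1 has_real_derivative P2 t) (at t within S)) \<and>
               continuous_on S P2)"
proof (intro exI[of _ "4 * L + T"] conjI allI impI, goal_cases)
  case 1
  show ?case using \<open>0 < L\<close> \<open>0 < T\<close> by simp
next
  case (2 n x i0 ftil fdot)
  then have n: "2 \<le> n" and inc: "\<forall>i\<in>{1..<n}. x i < x (Suc i)" by blast+
  have spline: "spline_residual x (\<lambda>j. Df 0 (x j)) fdot i = 0" if "2 \<le> i" "i < n" "i \<noteq> i0" for i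
    using 2 that by (auto simp: spline_residual_def spline_lam_def spline_mu_def Let_def)
  have h: "0 < hmax x n" "hmax x n < 1" using hmax_pos[OF inc n] 2 by auto
  then have "log 2 (hmax x n) < 0" by simp
  moreover have "3 - log 2 (hmax x n) < real i0" using 2 by blast
  ultimately have "0 < i0" by linarith
  have at_i0: "\<bar>fdot i0 - Df 1 (x i0)\<bar> = T * hmax x n powr p" using 2 by (auto simp: abs_minus_commute)
  show ?case
  proof (rule spline_derivative_error_zones[OF h _ _ \<open>0 < i0\<close>])
    show "\<bar>fdot i - Df 1 (x i)\<bar> \<le> barrier (4 * L * hmax x n ^ 3) (T * hmax x n powr p) i0 i"
      if "1 \<le> i" "i \<le> n" for i
      using 2 that at_i0 by (intro spline_derivative_error_le_barrier[OF deriv bound4 inc n _ _ spline]) auto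
  qed (use \<open>0 < L\<close> \<open>0 < T\<close> at_i0 in auto)
next
  case (3 n x i0 ftil fdot)
  then have n: "2 \<le> n" and inc: "\<forall>i\<in>{1..<n}. x i < x (Suc i)" by blast+
  have spline: "spline_residual x (\<lambda>j. Df 0 (x j)) fdot i = 0" if "2 \<le> i" "i < n" "i \<noteq> i0" for i
    using 3 that by (auto simp: spline_residual_def spline_lam_def spline_mu_def Let_def)
  note C2 = pchip_C2_except_node[OF inc n spline refl]
  show ?case
    unfolding Let_def continuous_on_eq_continuous_within
    by (rule exI[of _ "pchip_d1 x n (\<lambda>j. Df 0 (x j)) fdot"], rule exI[of _ "pchip_d2 x n (\<lambda>j. Df 0 (x j)) fdot"])
      (use C2 in blast)
qed

end
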